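(* Let $n\ge 4$ and $2\le t\le n-2$. Under the permutation null distribution, for all $a,b\in\{1,2\}$, \[ \mathsf{cov}\big(W_a(t),D_b(t)\big)=0 . \] Consequently $W_1(t)\pm W_2(t)$ are each uncorrelated with $D_1(t)\pm D_2(t)$ (all four sign combinations), and more generally any linear combination of $W_1(t),W_2(t)$ is uncorrelated with any linear combination of $D_1(t),D_2(t)$.
   Context: Let $G_1,\dots,G_n$ be a sequence of observations (networks) and let $K_1,K_2$ be two real symmetric $n\times n$ kernel matrices computed from this sequence, with $(i,j)$ entry $k_{xij}$ of $K_x$, $x\in\{1,2\}$. The permutation null distribution assigns probability $1/n!$ to each of the $n!$ permutations of the sequence, i.e. the kernel matrices $K_x$ are replaced by $(k_{x\pi(i)\pi(j)})_{i,j}$ for a uniformly random permutation $\pi$ of $\{1,\dots,n\}$ (the same $\pi$ for both kernels); $\mathsf{E},\mathsf{var},\mathsf{cov}$ denote expectation, variance and covariance under this distribution. For $x\in\{1,2\}$ define \[ \alpha_x(t)=\frac{1}{t(t-1)}\sum_{i=1}^n\sum_{j\ne i}k_{xij}\mathbb{1}\{i,j\le t\},\qquad \beta_x(t)=\frac{1}{(n-t)(n-t-1)}\sum_{i=1}^n\sum_{j\ne i}k_{xij}\mathbb{1}\{i,j> t\}, \] \[ W_x(t)=\frac{t}{n}\alpha_x(t)+\frac{n-t}{n}\beta_x(t),\qquad D_x(t)=\frac{t(t-1)}{n(n-1)}\alpha_x(t)-\frac{(n-t)(n-t-1)}{n(n-1)}\beta_x(t). \] *)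

theory Defs
  imports Complex_Main "HOL-Combinatorics.Permutations"
begin

definition permk :: "(nat \<Rightarrow> nat) \<Rightarrow> (nat \<Rightarrow> nat \<Rightarrow> real) \<Rightarrow> nat \<Rightarrow> nat \<Rightarrow> real" where
  "permk p k = (\<lambda>i j. k (p i) (p j))"

definition alpha :: "nat \<Rightarrow> (nat \<Rightarrow> nat \<Rightarrow> real) \<Rightarrow> nat \<Rightarrow> real" where
  "alpha n k t = (1 / (real t * (real t - 1))) *
     (\<Sum>i\<in>{1..n}. \<Sum>j\<in>{1..n} - {i}. k i j * (if i \<le> t \<and> j \<le> t then 1 else 0))"

definition beta :: "nat \<Rightarrow> (nat \<Rightarrow> nat \<Rightarrow> real) \<Rightarrow> nat \<Rightarrow> real" where
  "beta n k t = (1 / ((real n - real t) * (real n - real t - 1))) *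
     (\<Sum>i\<in>{1..n}. \<Sum>j\<in>{1..n} - {i}. k i j * (if i > t \<and> j > t then 1 else 0))"

definition Wstat :: "nat \<Rightarrow> (nat \<Rightarrow> nat \<Rightarrow> real) \<Rightarrow> nat \<Rightarrow> real" where
  "Wstat n k t = (real t / real n) * alpha n k t + ((real n - real t) / real n) * beta n k t"

definition Dstat :: "nat \<Rightarrow> (nat \<Rightarrow> nat \<Rightarrow> real) \<Rightarrow> nat \<Rightarrow> real" where
  "Dstat n k t = (real t * (real t - 1)) / (real n * (real n - 1)) * alpha n k t
     - ((real n - real t) * (real n - real t - 1)) / (real n * (real n - 1)) * beta n k t"

definition permE :: "nat \<Rightarrow> ((nat \<Rightarrow> nat) \<Rightarrow> real) \<Rightarrow> real" where
  "permE n X = (\<Sum>p\<in>{p. p permutes {1..n}}. X p) / fact n"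

definition permCov :: "nat \<Rightarrow> ((nat \<Rightarrow> nat) \<Rightarrow> real) \<Rightarrow> ((nat \<Rightarrow> nat) \<Rightarrow> real) \<Rightarrow> real" where
  "permCov n X Y = permE n (\<lambda>p. X p * Y p) - permE n X * permE n Y"

end

theory Submission
  imports Defs
begin

text \<open>After reindexing by the permutation, both statistics are quadratic forms, sums over
  \<open>u \<noteq> v\<close> of \<open>k u v * F (p u) (p v)\<close> in the fixed kernel \<open>k\<close>.  For W the weight F is
  symmetric with constant row sums \<open>1/n\<close>; for D it splits as \<open>g i + g j + c\<close>.  By
  exchangeability of the positions under a uniform random permutation, a symmetric weight with
  constant row sums evaluated at \<open>(p u, p v)\<close> is uncorrelated with every single-position
  variable \<open>g (p w)\<close>, and bilinearity of the covariance finishes the proof.\<close>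

lemma permE_cong: "(\<And>p. p permutes {1..n} \<Longrightarrow> f p = g p) \<Longrightarrow> permE n f = permE n g"
  unfolding permE_def by (auto intro!: sum.cong)

lemma permE_sum: "permE n (\<lambda>p. \<Sum>x\<in>A. f x p) = (\<Sum>x\<in>A. permE n (f x))"
  unfolding permE_def by (subst sum.swap) (simp add: sum_divide_distrib)

lemma permE_cmult: "permE n (\<lambda>p. c * f p) = c * permE n f"
  unfolding permE_def by (simp add: sum_distrib_left)

lemma permE_add: "permE n (\<lambda>p. f p + g p) = permE n f + permE n g"
  unfolding permE_def by (simp add: sum.distrib add_divide_distrib)

lemma permE_diff: "permE n (\<lambda>p. f p - g p) = permE n f - permE n g"
  unfolding permE_def by (simp add: sum_subtractf diff_divide_distrib)

lemma permE_const: "permE n (\<lambda>p. c) = c"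
  unfolding permE_def by (simp add: card_permutations)

lemma permE_inv: "permE n (\<lambda>p. f (inv p)) = permE n f"
  unfolding permE_def by (simp add: sum_permutations_inverse[symmetric])

lemma permE_compose_transpose:
  "a \<in> {1..n} \<Longrightarrow> b \<in> {1..n} \<Longrightarrow> permE n (\<lambda>p. f (p \<circ> transpose a b)) = permE n f"
  unfolding permE_def by (simp add: sum_permutations_compose_right[OF permutes_swap_id, symmetric])

lemma permCov_inv: "permCov n (\<lambda>p. X (inv p)) (\<lambda>p. Y (inv p)) = permCov n X Y"
  unfolding permCov_def by (simp add: permE_inv[of n X] permE_inv[of n Y] permE_inv[of n "\<lambda>p. X p * Y p"])

lemma permCov_cong:
  "(\<And>p. p permutes {1..n} \<Longrightarrow> X p = X' p) \<Longrightarrow> (\<And>p. p permutes {1..n} \<Longrightarrow> Y p = Y' p)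
    \<Longrightarrow> permCov n X Y = permCov n X' Y'"
  unfolding permCov_def by (metis (no_types, lifting) permE_cong)

lemma permCov_sum_left: "permCov n (\<lambda>p. \<Sum>x\<in>A. f x p) Y = (\<Sum>x\<in>A. permCov n (f x) Y)"
  unfolding permCov_def by (simp add: sum_distrib_right permE_sum sum_subtractf)

lemma permCov_sum_right: "permCov n X (\<lambda>p. \<Sum>x\<in>A. f x p) = (\<Sum>x\<in>A. permCov n X (f x))"
  unfolding permCov_def by (simp add: sum_distrib_left permE_sum sum_subtractf)

lemma permCov_cmult_left: "permCov n (\<lambda>p. c * X p) Y = c * permCov n X Y"
  unfolding permCov_def by (simp add: permE_cmult mult.assoc right_diff_distrib)

lemma permCov_cmult_right: "permCov n X (\<lambda>p. c * Y p) = c * permCov n X Y"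
  unfolding permCov_def by (simp add: permE_cmult mult.left_commute right_diff_distrib)

lemma permCov_add_left: "permCov n (\<lambda>p. X p + Z p) Y = permCov n X Y + permCov n Z Y"
  unfolding permCov_def by (simp add: distrib_right permE_add algebra_simps)

lemma permCov_add_right: "permCov n X (\<lambda>p. Y p + Z p) = permCov n X Y + permCov n X Z"
  unfolding permCov_def by (simp add: distrib_left permE_add algebra_simps)

lemma permCov_const_right: "permCov n X (\<lambda>p. c) = 0"
  unfolding permCov_def by (simp add: permE_const mult.commute permE_cmult[of n c X, symmetric])

lemma permE_exchangeable:
  assumes "w \<in> A" "A \<subseteq> {1..n}"
    and "\<And>p x. x \<in> A \<Longrightarrow> H (p \<circ> transpose w x) x = H p w"
  shows "card A * permE n (\<lambda>p. H p w) = permE n (\<lambda>p. \<Sum>x\<in>A. H p x)"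
proof -
  have "permE n (\<lambda>p. H p x) = permE n (\<lambda>p. H p w)" if "x \<in> A" for x
  proof -
    have "permE n (\<lambda>p. H p x) = permE n (\<lambda>p. H (p \<circ> transpose w x) x)"
      by (rule permE_compose_transpose[symmetric]) (use assms that in auto)
    also have "\<dots> = permE n (\<lambda>p. H p w)"
      using assms(3)[OF that] by simp
    finally show ?thesis .
  qed
  then show ?thesis
    by (simp add: permE_sum)
qed

lemma sum_permutes_remove:
  assumes "p permutes S" "u \<in> S"
  shows "(\<Sum>x\<in>S - {u}. f (p x)) = (\<Sum>j\<in>S - {p u}. f j)"
proof -
  have "bij_betw p (S - {u}) (S - {p u})"
    using assms by (intro bij_betw_DiffI) (auto simp: permutes_imp_bij permutes_in_image)
  then show ?thesis
    by (simp add: sum.reindex_bij_betw)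
qed

lemma permE_eval:
  assumes "w \<in> {1..n}"
  shows "permE n (\<lambda>p. g (p w)) = (\<Sum>i\<in>{1..n}. g i) / n"
proof -
  have "n * permE n (\<lambda>p. g (p w)) = permE n (\<lambda>p. \<Sum>x\<in>{1..n}. g (p x))"
    using permE_exchangeable[of w "{1..n}" n "\<lambda>p x. g (p x)"] assms by simp
  also have "\<dots> = permE n (\<lambda>p. \<Sum>i\<in>{1..n}. g i)"
    by (intro permE_cong) (metis (no_types) comp_apply sum.cong sum.permute)
  finally show ?thesis
    using assms by (simp add: permE_const field_simps)
qed

lemma permE_rowsum:
  assumes rows: "\<And>i. i \<in> {1..n} \<Longrightarrow> (\<Sum>j\<in>{1..n} - {i}. F i j) = r"
    and "u \<in> {1..n}" "v \<in> {1..n}" "u \<noteq> v"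
  shows "(real n - 1) * permE n (\<lambda>p. F (p u) (p v) * h (p u)) = r * permE n (\<lambda>p. h (p u))"
proof -
  let ?S = "{1..n}"
  have "card (?S - {u}) * permE n (\<lambda>p. F (p u) (p v) * h (p u))
      = permE n (\<lambda>p. \<Sum>x\<in>?S - {u}. F (p u) (p x) * h (p u))"
    using assms by (intro permE_exchangeable) auto
  also have "\<dots> = permE n (\<lambda>p. r * h (p u))"
  proof (rule permE_cong)
    fix p assume p: "p permutes ?S"
    have "(\<Sum>x\<in>?S - {u}. F (p u) (p x)) = (\<Sum>j\<in>?S - {p u}. F (p u) j)"
      using sum_permutes_remove[OF p \<open>u \<in> ?S\<close>] .
    also have "\<dots> = r"
      using rows permutes_in_image[OF p] \<open>u \<in> ?S\<close> by blast
    finally show "(\<Sum>x\<in>?S - {u}. F (p u) (p x) * h (p u)) = r * h (p u)"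
      by (simp add: sum_distrib_right[symmetric])
  qed
  finally show ?thesis
    using assms by (simp add: permE_cmult of_nat_diff)
qed

lemma permE_pair_times_other:
  assumes "u \<in> {1..n}" "v \<in> {1..n}" "u \<noteq> v" "w \<in> {1..n} - {u, v}"
  shows "(real n - 2) * permE n (\<lambda>p. F (p u) (p v) * g (p w))
    = (\<Sum>i\<in>{1..n}. g i) * permE n (\<lambda>p. F (p u) (p v))
      - permE n (\<lambda>p. F (p u) (p v) * g (p u)) - permE n (\<lambda>p. F (p u) (p v) * g (p v))"
proof -
  let ?S = "{1..n}" and ?F = "\<lambda>p. F (p u) (p v)"
  have "card (?S - {u, v}) * permE n (\<lambda>p. ?F p * g (p w))
      = permE n (\<lambda>p. \<Sum>x\<in>?S - {u, v}. ?F p * g (p x))"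
    using assms by (intro permE_exchangeable) auto
  also have "\<dots> = permE n (\<lambda>p. (\<Sum>i\<in>?S. g i) * ?F p - ?F p * g (p u) - ?F p * g (p v))"
  proof (rule permE_cong)
    fix p assume p: "p permutes ?S"
    have "(\<Sum>x\<in>?S - {u, v}. g (p x)) = (\<Sum>x\<in>?S. g (p x)) - g (p u) - g (p v)"
      using assms by (simp add: sum_diff)
    also have "(\<Sum>x\<in>?S. g (p x)) = (\<Sum>i\<in>?S. g i)"
      using sum.permute[OF p, of g] by simp
    finally have sum_rest: "(\<Sum>x\<in>?S - {u, v}. g (p x)) = (\<Sum>i\<in>?S. g i) - g (p u) - g (p v)" .
    show "(\<Sum>x\<in>?S - {u, v}. ?F p * g (p x))
        = (\<Sum>i\<in>?S. g i) * ?F p - ?F p * g (p u) - ?F p * g (p v)"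
      unfolding sum_distrib_left[symmetric] sum_rest by (simp add: algebra_simps)
  qed
  also have "\<dots> = (\<Sum>i\<in>?S. g i) * permE n ?F
      - permE n (\<lambda>p. ?F p * g (p u)) - permE n (\<lambda>p. ?F p * g (p v))"
    by (simp only: permE_diff permE_cmult)
  finally show ?thesis
    using assms by (simp add: card_Diff_subset of_nat_diff)
qed

lemma permCov_rowsum_eval_eq_0:
  assumes sym: "\<And>i j. F i j = F j i"
    and rows: "\<And>i. i \<in> {1..n} \<Longrightarrow> (\<Sum>j\<in>{1..n} - {i}. F i j) = r"
    and uv: "u \<in> {1..n}" "v \<in> {1..n}" "u \<noteq> v" and w: "w \<in> {1..n}"
  shows "permCov n (\<lambda>p. F (p u) (p v)) (\<lambda>p. g (p w)) = 0"
proof -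
  let ?S = "{1..n}" and ?F = "\<lambda>p. F (p u) (p v)"
  define \<mu> where "\<mu> = (\<Sum>i\<in>?S. g i) / n"
  have Eg: "permE n (\<lambda>p. g (p x)) = \<mu>" if "x \<in> ?S" for x
    unfolding \<mu>_def using permE_eval[OF that] .
  have EF: "(real n - 1) * permE n ?F = r"
    using permE_rowsum[OF rows uv, of "\<lambda>_. 1"] by (simp add: permE_const)
  have EFu: "(real n - 1) * permE n (\<lambda>p. ?F p * g (p u)) = r * \<mu>"
    using permE_rowsum[OF rows uv, of g] Eg uv by simp
  have EFv: "(real n - 1) * permE n (\<lambda>p. ?F p * g (p v)) = r * \<mu>"
    using permE_rowsum[OF rows uv(2,1) uv(3)[symmetric], of g] Eg uv by (simp add: sym)
  have EFw: "(real n - 1) * permE n (\<lambda>p. ?F p * g (p w)) = r * \<mu>"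
  proof -
    consider "w = u" | "w = v" | "w \<in> ?S - {u, v}" using w by blast
    then show ?thesis
    proof cases
      case 3
      have "(real n - 2) * ((real n - 1) * permE n (\<lambda>p. ?F p * g (p w)))
          = (\<Sum>i\<in>?S. g i) * ((real n - 1) * permE n ?F)
            - (real n - 1) * permE n (\<lambda>p. ?F p * g (p u)) - (real n - 1) * permE n (\<lambda>p. ?F p * g (p v))"
        using permE_pair_times_other[OF uv 3, of F g]
        by (metis (no_types, lifting) mult.left_commute right_diff_distrib)
      also have "\<dots> = (real n - 2) * (r * \<mu>)"
        unfolding EF EFu EFv \<mu>_def using uv by (simp add: field_simps)
      finally show ?thesis
        using 3 uv by auto
    qed (use EFu EFv in simp_all)
  qed
  have "(real n - 1) * permCov n ?F (\<lambda>p. g (p w)) = 0"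
    unfolding permCov_def using EF EFw Eg[OF w] by (simp add: right_diff_distrib)
  then show ?thesis
    using uv by simp
qed

abbreviation offdiag_sum :: "nat set \<Rightarrow> (nat \<Rightarrow> nat \<Rightarrow> real) \<Rightarrow> real" where
  "offdiag_sum S h \<equiv> \<Sum>i\<in>S. \<Sum>j\<in>S - {i}. h i j"

lemma offdiag_sum_permute:
  assumes p: "p permutes S"
  shows "offdiag_sum S h = offdiag_sum S (\<lambda>u v. h (p u) (p v))"
proof -
  have "offdiag_sum S h = (\<Sum>u\<in>S. \<Sum>j\<in>S - {p u}. h (p u) j)"
    using sum.reindex_bij_betw[OF permutes_imp_bij[OF p], of "\<lambda>i. \<Sum>j\<in>S - {i}. h i j"] by simp
  also have "\<dots> = offdiag_sum S (\<lambda>u v. h (p u) (p v))"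
    by (rule sum.cong[OF refl]) (simp add: sum_permutes_remove[OF p])
  finally show ?thesis .
qed

lemma offdiag_sum_permk_inv:
  assumes "p permutes S"
  shows "offdiag_sum S (\<lambda>i j. permk (inv p) k i j * F i j) = offdiag_sum S (\<lambda>u v. k u v * F (p u) (p v))"
  by (subst offdiag_sum_permute[OF assms]) (simp add: permk_def permutes_inverses[OF assms])

lemma permCov_offdiag_sums_eq_0:
  assumes sym: "\<And>i j. F i j = F j i"
    and rows: "\<And>i. i \<in> {1..n} \<Longrightarrow> (\<Sum>j\<in>{1..n} - {i}. F i j) = r"
    and G: "\<And>i j. G i j = g i + g j + c"
  shows "permCov n (\<lambda>p. offdiag_sum {1..n} (\<lambda>i j. permk p k i j * F i j))
                   (\<lambda>p. offdiag_sum {1..n} (\<lambda>i j. permk p k' i j * G i j)) = 0"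
proof -
  let ?S = "{1..n}"
  have "permCov n (\<lambda>p. offdiag_sum ?S (\<lambda>i j. permk p k i j * F i j))
                  (\<lambda>p. offdiag_sum ?S (\<lambda>i j. permk p k' i j * G i j))
      = permCov n (\<lambda>p. offdiag_sum ?S (\<lambda>i j. permk (inv p) k i j * F i j))
                  (\<lambda>p. offdiag_sum ?S (\<lambda>i j. permk (inv p) k' i j * G i j))"
    by (rule permCov_inv[symmetric])
  also have "\<dots> = permCov n (\<lambda>p. offdiag_sum ?S (\<lambda>u v. k u v * F (p u) (p v)))
                             (\<lambda>p. offdiag_sum ?S (\<lambda>u v. k' u v * G (p u) (p v)))"
    by (intro permCov_cong offdiag_sum_permk_inv)
  also have "\<dots> = offdiag_sum ?S (\<lambda>u v. offdiag_sum ?S (\<lambda>u' v'.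
      k u v * (k' u' v' * permCov n (\<lambda>p. F (p u) (p v)) (\<lambda>p. G (p u') (p v')))))"
    by (simp only: permCov_sum_left permCov_sum_right permCov_cmult_left permCov_cmult_right)
  also have "\<dots> = 0"
  proof (intro sum.neutral ballI)
    fix u v u' v' assume "u \<in> ?S" "v \<in> ?S - {u}" "u' \<in> ?S" "v' \<in> ?S - {u'}"
    then show "k u v * (k' u' v' * permCov n (\<lambda>p. F (p u) (p v)) (\<lambda>p. G (p u') (p v'))) = 0"
      using permCov_rowsum_eval_eq_0[OF sym rows, of u v]
      by (simp add: G permCov_add_right permCov_const_right)
  qed
  finally show ?thesis .
qed

definition W_weight :: "nat \<Rightarrow> nat \<Rightarrow> nat \<Rightarrow> nat \<Rightarrow> real" where
  "W_weight n t i j = of_bool (i \<le> t \<and> j \<le> t) / (real n * (real t - 1))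
     + of_bool (t < i \<and> t < j) / (real n * (real n - real t - 1))"

definition D_weight :: "nat \<Rightarrow> nat \<Rightarrow> nat \<Rightarrow> nat \<Rightarrow> real" where
  "D_weight n t i j = (of_bool (i \<le> t) + of_bool (j \<le> t) - 1) / (real n * (real n - 1))"

lemma Wstat_eq_offdiag_sum:
  assumes "2 \<le> t" "t + 2 \<le> n"
  shows "Wstat n k t = offdiag_sum {1..n} (\<lambda>i j. k i j * W_weight n t i j)"
proof -
  define A where "A = 1 / (real n * (real t - 1))"
  define B where "B = 1 / (real n * (real n - real t - 1))"
  have nz: "real t \<noteq> 0" "real n \<noteq> 0" "real n - real t \<noteq> 0"
    using assms by auto
  have cA: "real t / real n * (1 / (real t * (real t - 1))) = A"
    unfolding A_def using nz by simp
  have cB: "(real n - real t) / real n * (1 / ((real n - real t) * (real n - real t - 1))) = B"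
    unfolding B_def using nz by simp
  have "k i j * W_weight n t i j = A * (k i j * (if i \<le> t \<and> j \<le> t then 1 else 0))
      + B * (k i j * (if t < i \<and> t < j then 1 else 0))" for i j
    unfolding W_weight_def A_def B_def by simp
  then show ?thesis
    unfolding Wstat_def alpha_def beta_def mult.assoc[symmetric] cA cB
    by (simp add: sum.distrib sum_distrib_left mult.assoc)
qed

lemma Dstat_eq_offdiag_sum:
  assumes "2 \<le> t" "t + 2 \<le> n"
  shows "Dstat n k t = offdiag_sum {1..n} (\<lambda>i j. k i j * D_weight n t i j)"
proof -
  define C where "C = 1 / (real n * (real n - 1))"
  have nz: "real t * (real t - 1) \<noteq> 0" "(real n - real t) * (real n - real t - 1) \<noteq> 0"
    using assms by auto
  have cA: "real t * (real t - 1) / (real n * (real n - 1)) * (1 / (real t * (real t - 1))) = C"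
    unfolding C_def using nz by simp
  have cB: "(real n - real t) * (real n - real t - 1) / (real n * (real n - 1))
      * (1 / ((real n - real t) * (real n - real t - 1))) = C"
    unfolding C_def using nz by simp
  have "k i j * D_weight n t i j = C * (k i j * (if i \<le> t \<and> j \<le> t then 1 else 0))
      - C * (k i j * (if t < i \<and> t < j then 1 else 0))" for i j
    unfolding D_weight_def C_def by auto
  then show ?thesis
    unfolding Dstat_def alpha_def beta_def mult.assoc[symmetric] cA cB
    by (simp add: sum_subtractf sum_distrib_left mult.assoc)
qed

lemma W_weight_row_sum:
  assumes "2 \<le> t" "t + 2 \<le> n" "i \<in> {1..n}"
  shows "(\<Sum>j\<in>{1..n} - {i}. W_weight n t i j) = 1 / real n"
proof (cases "i \<le> t")
  case True
  have "({1..n} - {i}) \<inter> {j. j \<le> t} = {1..t} - {i}"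
    using assms by auto
  then have "(\<Sum>j\<in>{1..n} - {i}. W_weight n t i j) = real (t - 1) / (real n * (real t - 1))"
    using True assms by (simp add: W_weight_def sum_divide_distrib[symmetric])
  also have "real (t - 1) = real t - 1"
    using assms by (simp add: of_nat_diff)
  finally show ?thesis
    using assms by simp
next
  case False
  have "({1..n} - {i}) \<inter> {j. t < j} = {t<..n} - {i}"
    using assms by auto
  then have "(\<Sum>j\<in>{1..n} - {i}. W_weight n t i j) = real (n - t - 1) / (real n * (real n - real t - 1))"
    using False assms by (simp add: W_weight_def sum_divide_distrib[symmetric])
  also have "real (n - t - 1) = real n - real t - 1"
    using assms by (simp add: of_nat_diff)
  finally show ?thesis
    using assms by simp
qed

lemma permCov_Wstat_Dstat_eq_0:
  assumes "2 \<le> t" "t + 2 \<le> n"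
  shows "permCov n (\<lambda>p. Wstat n (permk p ka) t) (\<lambda>p. Dstat n (permk p kb) t) = 0"
  unfolding Wstat_eq_offdiag_sum[OF assms] Dstat_eq_offdiag_sum[OF assms]
proof (rule permCov_offdiag_sums_eq_0)
  show "W_weight n t i j = W_weight n t j i" for i j
    by (auto simp: W_weight_def)
  show "(\<Sum>j\<in>{1..n} - {i}. W_weight n t i j) = 1 / real n" if "i \<in> {1..n}" for i
    using W_weight_row_sum[OF assms that] .
  show "D_weight n t i j = of_bool (i \<le> t) / (real n * (real n - 1))
      + of_bool (j \<le> t) / (real n * (real n - 1)) + - 1 / (real n * (real n - 1))" for i j
    unfolding D_weight_def by (simp add: add_divide_distrib diff_divide_distrib)
qed

theorem mainTheorem2:
  fixes K :: "nat \<Rightarrow> nat \<Rightarrow> nat \<Rightarrow> real" and n t :: nat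
  assumes "n \<ge> 4" and "2 \<le> t" and "t \<le> n - 2"
    and "\<And>x i j. x \<in> {1,2} \<Longrightarrow> i \<in> {1..n} \<Longrightarrow> j \<in> {1..n} \<Longrightarrow> K x i j = K x j i"
  shows "(\<forall>a\<in>{1,2}. \<forall>b\<in>{1,2}.
            permCov n (\<lambda>p. Wstat n (permk p (K a)) t) (\<lambda>p. Dstat n (permk p (K b)) t) = 0)
       \<and> (\<forall>c1 c2 d1 d2 :: real.
            permCov n (\<lambda>p. c1 * Wstat n (permk p (K 1)) t + c2 * Wstat n (permk p (K 2)) t)
                      (\<lambda>p. d1 * Dstat n (permk p (K 1)) t + d2 * Dstat n (permk p (K 2)) t) = 0)"
proof -
  have "2 \<le> t" "t + 2 \<le> n"
    using assms(1-3) by auto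
  then show ?thesis
    by (simp add: permCov_add_left permCov_add_right permCov_cmult_left permCov_cmult_right
        permCov_Wstat_Dstat_eq_0)
qed

end
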